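(* Let $\mathbb{K}$ be a field, $S=\mathbb{K}[x_1,\ldots,x_n]$, and let $I\subseteq S$ be a support-$2$ monomial ideal with underlying simple graph $G(I)$. Suppose there is an edge $\{x_i,x_j\}\in E(G(I))$ such that every minimal vertex cover of $G(I)$ contains exactly one of $x_i,x_j$. If there is some $u\in\mathcal{G}(I)$ with $x_i^{\nu_{i,j}+1}\mid u$ or $x_j^{\nu_{j,i}+1}\mid u$, then $I^{(1)}\neq I$.
   Context: For a monomial ideal $I$, $\mathcal{G}(I)$ denotes its minimal set of monomial generators. $I$ is a support-$2$ monomial ideal if $\mathcal{G}(I)\subseteq\{x_i^ax_j^b : 1\le i<j\le n,\ a,b\ge 1\}$. The underlying simple graph $G(I)$ has vertices $x_1,\ldots,x_n$ and an edge $\{x_i,x_j\}$ whenever some element of $\mathcal{G}(I)$ has support $\{x_i,x_j\}$. For an edge $\{x_i,x_j\}$, $\nu_{i,j}$ denotes the minimum exponent of $x_i$ among the elements of $\mathcal{G}(I)$ whose support is $\{x_i,x_j\}$ (and $\nu_{j,i}$ the minimum exponent of $x_j$ among them). $I^{(1)}=\bigcap_{P\in\mathrm{MinAss}(I)}(IS_P\cap S)$, the intersection of the primary components of $I$ at its minimal primes; $I^{(1)}\neq I$ is equivalent to $I$ having an embedded associated prime. *)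

theory Defs
  imports "HOL-Library.Poly_Mapping"
begin

text \<open>Polynomial ring S = K[x_i : i in 'n] (the variables are indexed by a finite type 'n,
  so n = CARD('n)).  A polynomial is a finitely supported map from exponent vectors
  (monomials) to coefficients, with the convolution product of Poly_Mapping.\<close>

type_synonym ('n, 'k) mpoly = "('n \<Rightarrow>\<^sub>0 nat) \<Rightarrow>\<^sub>0 'k"

definition monom :: "('n \<Rightarrow>\<^sub>0 nat) \<Rightarrow> ('n, 'k::field) mpoly" where
  "monom a = Poly_Mapping.single a 1"

definition is_ideal :: "('n, 'k::field) mpoly set \<Rightarrow> bool" where
  "is_ideal I \<longleftrightarrow> 0 \<in> I \<and> (\<forall>f\<in>I. \<forall>g\<in>I. f + g \<in> I) \<and> (\<forall>f\<in>I. \<forall>h. h * f \<in> I)"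

definition ideal_gen :: "('n, 'k::field) mpoly set \<Rightarrow> ('n, 'k) mpoly set" where
  "ideal_gen G = \<Inter> {J. is_ideal J \<and> G \<subseteq> J}"

definition is_monomial_ideal :: "('n, 'k::field) mpoly set \<Rightarrow> bool" where
  "is_monomial_ideal I \<longleftrightarrow> (\<exists>A. I = ideal_gen (monom ` A))"

definition mingens :: "('n, 'k::field) mpoly set \<Rightarrow> ('n \<Rightarrow>\<^sub>0 nat) set" where
  "mingens I = {a. monom a \<in> I \<and>
      (\<forall>b. monom b \<in> I \<and> (\<forall>i. Poly_Mapping.lookup b i \<le> Poly_Mapping.lookup a i) \<longrightarrow> b = a)}"

definition support2 :: "('n, 'k::field) mpoly set \<Rightarrow> bool" where
  "support2 I \<longleftrightarrow> is_monomial_ideal I \<and> (\<forall>a\<in>mingens I. card (Poly_Mapping.keys a) = 2)"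

definition gedge :: "('n, 'k::field) mpoly set \<Rightarrow> 'n \<Rightarrow> 'n \<Rightarrow> bool" where
  "gedge I i j \<longleftrightarrow> i \<noteq> j \<and> (\<exists>a\<in>mingens I. Poly_Mapping.keys a = {i, j})"

definition vertex_cover :: "('n, 'k::field) mpoly set \<Rightarrow> 'n set \<Rightarrow> bool" where
  "vertex_cover I C \<longleftrightarrow> (\<forall>i j. gedge I i j \<longrightarrow> i \<in> C \<or> j \<in> C)"

definition min_vertex_cover :: "('n, 'k::field) mpoly set \<Rightarrow> 'n set \<Rightarrow> bool" where
  "min_vertex_cover I C \<longleftrightarrow> vertex_cover I C \<and> (\<forall>D. D \<subseteq> C \<and> vertex_cover I D \<longrightarrow> D = C)"

definition nu :: "('n, 'k::field) mpoly set \<Rightarrow> 'n \<Rightarrow> 'n \<Rightarrow> nat" where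
  "nu I i j = Min {Poly_Mapping.lookup a i | a. a \<in> mingens I \<and> Poly_Mapping.keys a = {i, j}}"

definition prime_ideal :: "('n, 'k::field) mpoly set \<Rightarrow> bool" where
  "prime_ideal P \<longleftrightarrow> is_ideal P \<and> P \<noteq> UNIV \<and> (\<forall>f g. f * g \<in> P \<longrightarrow> f \<in> P \<or> g \<in> P)"

definition min_ass :: "('n, 'k::field) mpoly set \<Rightarrow> ('n, 'k) mpoly set set" where
  "min_ass I = {P. prime_ideal P \<and> I \<subseteq> P \<and>
      (\<forall>Q. prime_ideal Q \<and> I \<subseteq> Q \<and> Q \<subseteq> P \<longrightarrow> Q = P)}"

text \<open>I S_P \<inter> S = {f. s f \<in> I for some s not in P}.\<close>
definition loc_contract :: "('n, 'k::field) mpoly set \<Rightarrow> ('n, 'k) mpoly set \<Rightarrow> ('n, 'k) mpoly set" where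
  "loc_contract I P = {f. \<exists>s. s \<notin> P \<and> s * f \<in> I}"

definition symb1 :: "('n, 'k::field) mpoly set \<Rightarrow> ('n, 'k) mpoly set" where
  "symb1 I = (\<Inter>P\<in>min_ass I. loc_contract I P)"

end

theory Submission
  imports Defs "HOL-Library.Countable"
begin

(* If u is a minimal generator with x_i^(nu_ij + 1) dividing u, then f = u / x_i is not in I, but
   it lies in I S_P \<inter> S for every minimal prime P. Minimal primes of I are generated by variables:
   the ideal generated by the variables of a vertex cover is a prime containing I, so the variables
   in a minimal prime P form a minimal vertex cover of G(I). If x_i \<notin> P, then x_i f = u \<in> I.
   Otherwise x_j \<notin> P by the hypothesis on minimal covers, and x_j^b f is a multiple of a generator
   x_i^nu_ij x_j^b of I. *)

lemma ideal_mult_left: "is_ideal J \<Longrightarrow> f \<in> J \<Longrightarrow> h * f \<in> J"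
  by (simp add: is_ideal_def)

lemma ideal_sum: "is_ideal J \<Longrightarrow> (\<And>x. x \<in> A \<Longrightarrow> g x \<in> J) \<Longrightarrow> sum g A \<in> J"
  by (induction A rule: infinite_finite_induct) (auto simp: is_ideal_def)

lemma ideal_eq_UNIV_if_one_mem: "is_ideal J \<Longrightarrow> 1 \<in> J \<Longrightarrow> J = UNIV"
  using ideal_mult_left[of J 1] by auto

lemma subset_ideal_gen: "G \<subseteq> ideal_gen G"
  by (auto simp: ideal_gen_def)

lemma ideal_gen_least: "is_ideal J \<Longrightarrow> G \<subseteq> J \<Longrightarrow> ideal_gen G \<subseteq> J"
  by (auto simp: ideal_gen_def)

definition mvar :: "'n \<Rightarrow> ('n, 'k::field) mpoly" where
  "mvar i = monom (Poly_Mapping.single i 1)"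

lemma monom_add: "monom (a + b) = (monom a * monom b :: ('n, 'k::field) mpoly)"
  by (simp add: monom_def mult_single)

lemma monom_0: "monom 0 = (1 :: ('n, 'k::field) mpoly)"
  by (rule poly_mapping_eqI) (simp add: monom_def lookup_single lookup_one when_def)

lemma exponent_split_var:
  fixes a :: "'n \<Rightarrow>\<^sub>0 nat"
  assumes "Poly_Mapping.lookup a v \<noteq> 0"
  shows "a = Poly_Mapping.single v 1 + (a - Poly_Mapping.single v 1)"
  using assms by (auto intro!: poly_mapping_eqI simp: lookup_add lookup_minus lookup_single when_def)

lemma monom_split_var:
  assumes "Poly_Mapping.lookup a v \<noteq> 0"
  shows "monom a = (mvar v * monom (a - Poly_Mapping.single v 1) :: ('n, 'k::field) mpoly)"
  unfolding mvar_def monom_add[symmetric] using exponent_split_var[OF assms] by simp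

lemma monom_mem_if_le:
  assumes "is_ideal I" "monom b \<in> I" "\<forall>n. Poly_Mapping.lookup b n \<le> Poly_Mapping.lookup a n"
  shows "monom a \<in> I"
proof -
  have "a = (a - b) + b"
    using assms(3) by (intro poly_mapping_eqI) (simp add: lookup_add lookup_minus)
  then have "monom a = monom (a - b) * monom b"
    by (metis monom_add)
  then show ?thesis
    using assms(1,2) ideal_mult_left by metis
qed

definition total_degree :: "('n \<Rightarrow>\<^sub>0 nat) \<Rightarrow> nat" where
  "total_degree a = (\<Sum>i\<in>Poly_Mapping.keys a. Poly_Mapping.lookup a i)"

lemma total_degree_less:
  fixes a b :: "'n \<Rightarrow>\<^sub>0 nat"
  assumes le: "\<forall>n. Poly_Mapping.lookup b n \<le> Poly_Mapping.lookup a n" and "b \<noteq> a"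
  shows "total_degree b < total_degree a"
proof -
  have keys: "Poly_Mapping.keys b \<subseteq> Poly_Mapping.keys a"
    using le by (auto simp: in_keys_iff) (metis less_le_trans)
  obtain n where "Poly_Mapping.lookup b n \<noteq> Poly_Mapping.lookup a n"
    using \<open>b \<noteq> a\<close> poly_mapping_eqI by metis
  with le have n: "Poly_Mapping.lookup b n < Poly_Mapping.lookup a n"
    using le_neq_implies_less by blast
  have "total_degree b = (\<Sum>i\<in>Poly_Mapping.keys a. Poly_Mapping.lookup b i)"
    unfolding total_degree_def using keys by (intro sum.mono_neutral_left) (auto simp: in_keys_iff)
  also have "\<dots> < total_degree a"
    unfolding total_degree_def using le n by (intro sum_strict_mono_ex1) (auto simp: in_keys_iff)
  finally show ?thesis .
qed

lemma mingens_eq_if_le: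
  assumes "monom a \<in> I" "b \<in> mingens I"
    and "\<forall>n\<in>Poly_Mapping.keys a. Poly_Mapping.lookup a n \<le> Poly_Mapping.lookup b n"
  shows "a = b"
proof -
  have "\<forall>n. Poly_Mapping.lookup a n \<le> Poly_Mapping.lookup b n"
    using assms(3) by (metis in_keys_iff le0)
  then show ?thesis
    using assms(1,2) by (auto simp: mingens_def)
qed

lemma ex_mingens_le:
  assumes "monom a \<in> I"
  shows "\<exists>b\<in>mingens I. \<forall>n. Poly_Mapping.lookup b n \<le> Poly_Mapping.lookup a n"
proof -
  define S where "S = {b. monom b \<in> I \<and> (\<forall>n. Poly_Mapping.lookup b n \<le> Poly_Mapping.lookup a n)}"
  have "a \<in> S" using assms by (simp add: S_def)
  then obtain b where b: "b \<in> S" and least: "\<And>c. c \<in> S \<Longrightarrow> total_degree b \<le> total_degree c"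
    using ex_has_least_nat[of "\<lambda>b. b \<in> S" a total_degree] by blast
  have "b \<in> mingens I"
    unfolding mingens_def
  proof (intro CollectI conjI allI impI)
    show "monom b \<in> I" using b by (simp add: S_def)
  next
    fix c assume c: "monom c \<in> I \<and> (\<forall>n. Poly_Mapping.lookup c n \<le> Poly_Mapping.lookup b n)"
    then have "c \<in> S" using b by (auto simp: S_def intro: order_trans)
    show "c = b"
    proof (rule ccontr)
      assume "c \<noteq> b"
      then have "total_degree c < total_degree b"
        using c total_degree_less by blast
      with least[OF \<open>c \<in> S\<close>] show False by simp
    qed
  qed
  then show ?thesis using b by (auto simp: S_def)
qed

lemma proper_divisor_of_mingens_not_mem:
  assumes "u \<in> mingens I" "Poly_Mapping.lookup u v \<noteq> 0"
  shows "monom (u - Poly_Mapping.single v 1) \<notin> I"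
proof
  assume "monom (u - Poly_Mapping.single v 1) \<in> I"
  with assms(1) have "u - Poly_Mapping.single v 1 = u"
    by (auto simp: mingens_def lookup_minus)
  then have "Poly_Mapping.lookup u v - 1 = Poly_Mapping.lookup u v"
    by (metis lookup_minus lookup_single_eq)
  with assms(2) show False by simp
qed

lemma prime_ideal_monom_mem_imp_var_mem:
  assumes P: "prime_ideal P" and "monom a \<in> P"
  shows "\<exists>v\<in>Poly_Mapping.keys a. mvar v \<in> P"
  using assms(2)
proof (induction "total_degree a" arbitrary: a rule: less_induct)
  case less
  show ?case
  proof (cases "a = 0")
    case True
    then show ?thesis
      using less.prems P ideal_eq_UNIV_if_one_mem by (auto simp: monom_0 prime_ideal_def)
  next
    case False
    then obtain v where v: "v \<in> Poly_Mapping.keys a"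
      by (metis in_keys_iff lookup_zero poly_mapping_eqI)
    define a' where "a' = a - Poly_Mapping.single v 1"
    have "mvar v * monom a' \<in> P"
      using less.prems v monom_split_var unfolding a'_def by (metis in_keys_iff)
    then have "mvar v \<in> P \<or> monom a' \<in> P"
      using P by (auto simp: prime_ideal_def)
    moreover have "Poly_Mapping.lookup a' v < Poly_Mapping.lookup a v"
      using v by (simp add: a'_def lookup_minus in_keys_iff)
    then have "a' \<noteq> a"
      by auto
    then have "total_degree a' < total_degree a"
      by (intro total_degree_less) (simp_all add: a'_def lookup_minus)
    moreover have "Poly_Mapping.keys a' \<subseteq> Poly_Mapping.keys a"
      by (auto simp: a'_def in_keys_iff lookup_minus)
    ultimately show ?thesis
      using less.hyps v by blast
  qed
qed

lemma lookup_mult_unique_decomposition: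
  fixes f g :: "'a::monoid_add \<Rightarrow>\<^sub>0 'b::semiring_0"
  assumes "\<And>a b. a \<in> Poly_Mapping.keys f \<Longrightarrow> b \<in> Poly_Mapping.keys g \<Longrightarrow>
      a + b = a0 + b0 \<Longrightarrow> a = a0 \<and> b = b0"
  shows "Poly_Mapping.lookup (f * g) (a0 + b0) = Poly_Mapping.lookup f a0 * Poly_Mapping.lookup g b0"
proof -
  have "Poly_Mapping.lookup (f * g) (a0 + b0)
      = (\<Sum>(a, b). Poly_Mapping.lookup f a * Poly_Mapping.lookup g b when a0 + b0 = a + b)"
    by (simp add: lookup_mult prod_fun_unfold_prod[symmetric] prod_fun_def)
  also have "\<dots> = (\<Sum>ab. (case ab of (a, b) \<Rightarrow> Poly_Mapping.lookup f a * Poly_Mapping.lookup g b)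
      when (a0, b0) = ab)"
  proof (rule Sum_any.cong)
    fix ab :: "'a \<times> 'a"
    obtain a b where ab: "ab = (a, b)" by (cases ab)
    show "(case ab of (a, b) \<Rightarrow> Poly_Mapping.lookup f a * Poly_Mapping.lookup g b
          when a0 + b0 = a + b)
        = ((case ab of (a, b) \<Rightarrow> Poly_Mapping.lookup f a * Poly_Mapping.lookup g b)
          when (a0, b0) = ab)"
      using assms[of a b] by (cases "a \<in> Poly_Mapping.keys f \<and> b \<in> Poly_Mapping.keys g")
        (auto simp: ab when_def in_keys_iff)
  qed
  also have "\<dots> = Poly_Mapping.lookup f a0 * Poly_Mapping.lookup g b0"
    by simp
  finally show ?thesis .
qed

lemma finite_ex_max_image:
  fixes e :: "'a \<Rightarrow> 'b::linorder"
  assumes "finite A" "A \<noteq> {}"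
  shows "\<exists>m\<in>A. \<forall>a\<in>A. e a \<le> e m"
proof -
  have "Max (e ` A) \<in> e ` A"
    using assms by simp
  then obtain m where "m \<in> A" "e m = Max (e ` A)"
    by (metis imageE)
  then show ?thesis
    using assms(1) by (metis Max_ge finite_imageI imageI)
qed

(* Leading-term argument: the sum of the e-largest monomials of f and of g in the face M has a
   unique decomposition in keys f + keys g, so its coefficient in f * g cannot cancel. *)
lemma keys_mult_meets_face:
  fixes f g :: "'a::comm_monoid_add \<Rightarrow>\<^sub>0 'b::semiring_no_zero_divisors"
    and e :: "'a \<Rightarrow> 'c::{ordered_cancel_comm_monoid_add, linorder}"
  assumes e_inj: "inj e" and e_add: "\<And>a b. e (a + b) = e a + e b"
    and face: "\<And>a b. a + b \<in> M \<longleftrightarrow> a \<in> M \<and> b \<in> M"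
    and f: "Poly_Mapping.keys f \<inter> M \<noteq> {}" and g: "Poly_Mapping.keys g \<inter> M \<noteq> {}"
  shows "Poly_Mapping.keys (f * g) \<inter> M \<noteq> {}"
proof -
  obtain mf where mf: "mf \<in> Poly_Mapping.keys f \<inter> M"
      "\<And>a. a \<in> Poly_Mapping.keys f \<inter> M \<Longrightarrow> e a \<le> e mf"
    using finite_ex_max_image[of "Poly_Mapping.keys f \<inter> M" e] f by auto
  obtain mg where mg: "mg \<in> Poly_Mapping.keys g \<inter> M"
      "\<And>b. b \<in> Poly_Mapping.keys g \<inter> M \<Longrightarrow> e b \<le> e mg"
    using finite_ex_max_image[of "Poly_Mapping.keys g \<inter> M" e] g by auto
  have unique: "a = mf \<and> b = mg"
    if "a \<in> Poly_Mapping.keys f" "b \<in> Poly_Mapping.keys g" "a + b = mf + mg" for a b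
  proof -
    have "a \<in> M" "b \<in> M"
      using face mf(1) mg(1) that(3) by (metis IntD2)+
    then have le: "e a \<le> e mf" "e b \<le> e mg"
      using mf(2) mg(2) that(1,2) by auto
    have sum: "e a + e b = e mf + e mg"
      using that(3) e_add by metis
    have "e a = e mf"
      using le sum add_less_le_mono[of "e a" "e mf" "e b" "e mg"] by fastforce
    moreover have "e b = e mg"
      using le sum \<open>e a = e mf\<close> by simp
    ultimately show ?thesis
      using e_inj by (simp add: inj_eq)
  qed
  have "Poly_Mapping.lookup (f * g) (mf + mg) = Poly_Mapping.lookup f mf * Poly_Mapping.lookup g mg"
    using unique by (rule lookup_mult_unique_decomposition)
  also have "\<dots> \<noteq> 0"
    using mf(1) mg(1) by (simp add: in_keys_iff)
  finally show ?thesis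
    using face mf(1) mg(1) by (auto simp: in_keys_iff)
qed

(* Pulling back the lexicographic order of nat \<Rightarrow>\<^sub>0 nat along this additive injection gives a
   monomial order, although the variables themselves carry no order. *)
definition exponents_to_nat :: "('n::countable \<Rightarrow>\<^sub>0 nat) \<Rightarrow> nat \<Rightarrow>\<^sub>0 nat" where
  "exponents_to_nat a =
     (\<Sum>i\<in>Poly_Mapping.keys a. Poly_Mapping.single (to_nat i) (Poly_Mapping.lookup a i))"

lemma lookup_exponents_to_nat:
  "Poly_Mapping.lookup (exponents_to_nat a) (to_nat i) = Poly_Mapping.lookup a i"
  by (auto simp: exponents_to_nat_def lookup_sum lookup_single when_def in_keys_iff
      intro: sum.delta'[THEN trans])

lemma inj_exponents_to_nat: "inj exponents_to_nat"
  by (rule injI, rule poly_mapping_eqI) (metis lookup_exponents_to_nat)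

lemma exponents_to_nat_add: "exponents_to_nat (a + b) = exponents_to_nat a + exponents_to_nat b"
  unfolding exponents_to_nat_def by (rule setsum_keys_plus_distrib) (simp_all add: single_add)

definition avoids :: "'n set \<Rightarrow> ('n \<Rightarrow>\<^sub>0 nat) \<Rightarrow> bool" where
  "avoids D a \<longleftrightarrow> (\<forall>d\<in>D. Poly_Mapping.lookup a d = 0)"

(* The ideal generated by the variables x_d, d \<in> D, described by the supports of its elements. *)
definition var_ideal :: "'n set \<Rightarrow> ('n, 'k::field) mpoly set" where
  "var_ideal D = {p. \<forall>a\<in>Poly_Mapping.keys p. \<not> avoids D a}"

lemma avoids_add: "avoids D (a + b) \<longleftrightarrow> avoids D a \<and> avoids D b"
  by (auto simp: avoids_def lookup_add)

lemma is_ideal_var_ideal: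
  fixes D :: "'n set"
  shows "is_ideal (var_ideal D :: ('n, 'k::field) mpoly set)"
  unfolding is_ideal_def
proof (intro conjI ballI allI)
  show "0 \<in> var_ideal D"
    by (simp add: var_ideal_def)
next
  fix f g :: "('n, 'k) mpoly"
  assume "f \<in> var_ideal D" "g \<in> var_ideal D"
  then show "f + g \<in> var_ideal D"
    using keys_add[of f g] by (auto simp: var_ideal_def)
next
  fix f h :: "('n, 'k) mpoly"
  assume "f \<in> var_ideal D"
  then show "h * f \<in> var_ideal D"
    using keys_mult[of h f] by (fastforce simp: var_ideal_def avoids_add)
qed

lemma one_not_mem_var_ideal: "1 \<notin> var_ideal D"
  by (simp add: var_ideal_def avoids_def)

lemma prime_ideal_var_ideal:
  fixes D :: "'n::countable set"
  shows "prime_ideal (var_ideal D :: ('n, 'k::field) mpoly set)"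
  unfolding prime_ideal_def
proof (intro conjI allI impI)
  show "is_ideal (var_ideal D :: ('n, 'k) mpoly set)"
    by (rule is_ideal_var_ideal)
  show "var_ideal D \<noteq> (UNIV :: ('n, 'k) mpoly set)"
    using one_not_mem_var_ideal by blast
next
  fix f g :: "('n, 'k) mpoly"
  assume fg: "f * g \<in> var_ideal D"
  show "f \<in> var_ideal D \<or> g \<in> var_ideal D"
  proof (rule ccontr)
    assume "\<not> ?thesis"
    then have "Poly_Mapping.keys f \<inter> Collect (avoids D) \<noteq> {}"
      and "Poly_Mapping.keys g \<inter> Collect (avoids D) \<noteq> {}"
      by (auto simp: var_ideal_def)
    then have "Poly_Mapping.keys (f * g) \<inter> Collect (avoids D) \<noteq> {}"
      by (intro keys_mult_meets_face[where e = exponents_to_nat])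
        (simp_all add: inj_exponents_to_nat exponents_to_nat_add avoids_add)
    with fg show False
      by (auto simp: var_ideal_def)
  qed
qed

lemma sum_single_lookup:
  "(\<Sum>m\<in>Poly_Mapping.keys p. Poly_Mapping.single m (Poly_Mapping.lookup p m)) = p"
  by (rule poly_mapping_eqI) (auto simp: lookup_sum lookup_single when_def in_keys_iff)

lemma var_ideal_subset:
  fixes J :: "('n, 'k::field) mpoly set"
  assumes J: "is_ideal J" and D: "mvar ` D \<subseteq> J"
  shows "var_ideal D \<subseteq> J"
proof
  fix p :: "('n, 'k) mpoly"
  assume p: "p \<in> var_ideal D"
  have "Poly_Mapping.single m (Poly_Mapping.lookup p m) \<in> J" if m: "m \<in> Poly_Mapping.keys p" for m
  proof -
    obtain d where d: "d \<in> D" "Poly_Mapping.lookup m d \<noteq> 0"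
      using p m by (auto simp: var_ideal_def avoids_def)
    have "Poly_Mapping.single m (Poly_Mapping.lookup p m)
        = Poly_Mapping.single 0 (Poly_Mapping.lookup p m) * monom m"
      by (simp add: monom_def mult_single)
    also have "\<dots> = (Poly_Mapping.single 0 (Poly_Mapping.lookup p m)
        * monom (m - Poly_Mapping.single d 1)) * mvar d"
      unfolding monom_split_var[OF d(2)] by (simp only: ac_simps)
    also have "\<dots> \<in> J"
      using J D d(1) ideal_mult_left by blast
    finally show ?thesis .
  qed
  then show "p \<in> J"
    using ideal_sum[OF J] sum_single_lookup[of p] by metis
qed

definition vars_in :: "('n, 'k::field) mpoly set \<Rightarrow> 'n set" where
  "vars_in P = {i. mvar i \<in> P}"

lemma vars_in_var_ideal: "vars_in (var_ideal D) \<subseteq> D"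
  by (auto simp: vars_in_def var_ideal_def avoids_def mvar_def monom_def lookup_single when_def)

lemma vertex_cover_vars_in:
  assumes P: "prime_ideal P" and "I \<subseteq> P"
  shows "vertex_cover I (vars_in P)"
  unfolding vertex_cover_def
proof (intro allI impI)
  fix x y
  assume "gedge I x y"
  then obtain a where a: "a \<in> mingens I" "Poly_Mapping.keys a = {x, y}"
    by (auto simp: gedge_def)
  then have "monom a \<in> P"
    using \<open>I \<subseteq> P\<close> by (auto simp: mingens_def)
  then show "x \<in> vars_in P \<or> y \<in> vars_in P"
    using prime_ideal_monom_mem_imp_var_mem[OF P] a(2) by (fastforce simp: vars_in_def)
qed

lemma subset_var_ideal_if_vertex_cover:
  assumes I: "support2 I" and D: "vertex_cover I D"
  shows "I \<subseteq> var_ideal D"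
proof -
  obtain A where A: "I = ideal_gen (monom ` A)"
    using I by (auto simp: support2_def is_monomial_ideal_def)
  have "monom a \<in> var_ideal D" if "a \<in> A" for a
  proof -
    have "monom a \<in> I"
      using A that subset_ideal_gen by blast
    then obtain b where b: "b \<in> mingens I" "\<forall>n. Poly_Mapping.lookup b n \<le> Poly_Mapping.lookup a n"
      using ex_mingens_le by blast
    then obtain x y where "x \<noteq> y" "Poly_Mapping.keys b = {x, y}"
      using I by (metis card_2_iff support2_def)
    then have "gedge I x y" and "x \<in> Poly_Mapping.keys b" "y \<in> Poly_Mapping.keys b"
      using b(1) by (auto simp: gedge_def)
    then obtain d where "d \<in> D" "Poly_Mapping.lookup b d \<noteq> 0"
      using D by (auto simp: vertex_cover_def in_keys_iff)
    with b(2) have "\<not> avoids D a"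
      by (metis avoids_def le_zero_eq)
    then show ?thesis
      by (simp add: var_ideal_def monom_def)
  qed
  then show ?thesis
    using A ideal_gen_least[OF is_ideal_var_ideal] by blast
qed

lemma min_vertex_cover_vars_in_min_ass:
  fixes I :: "('n::countable, 'k::field) mpoly set"
  assumes I: "support2 I" and P: "P \<in> min_ass I"
  shows "min_vertex_cover I (vars_in P)"
  unfolding min_vertex_cover_def
proof (intro conjI allI impI)
  have P_prime: "prime_ideal P" and "I \<subseteq> P"
    using P by (auto simp: min_ass_def)
  then show "vertex_cover I (vars_in P)"
    by (rule vertex_cover_vars_in)
  fix D
  assume D: "D \<subseteq> vars_in P \<and> vertex_cover I D"
  have minimal: "\<And>Q. prime_ideal Q \<Longrightarrow> I \<subseteq> Q \<Longrightarrow> Q \<subseteq> P \<Longrightarrow> Q = P"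
    using P by (auto simp: min_ass_def)
  have "var_ideal D = P"
  proof (rule minimal[OF prime_ideal_var_ideal])
    show "I \<subseteq> var_ideal D"
      using I D subset_var_ideal_if_vertex_cover by blast
    show "var_ideal D \<subseteq> P"
      using D P_prime by (intro var_ideal_subset) (auto simp: prime_ideal_def vars_in_def)
  qed
  then have "vars_in P \<subseteq> D"
    using vars_in_var_ideal by metis
  with D show "D = vars_in P"
    by blast
qed

lemma mingens_eq_if_same_keys_and_lookup:
  assumes "a \<in> mingens I" "b \<in> mingens I"
    and "Poly_Mapping.keys a = {x, y}" "Poly_Mapping.keys b = {x, y}"
    and "Poly_Mapping.lookup a x = Poly_Mapping.lookup b x"
  shows "a = b"
proof (cases "Poly_Mapping.lookup a y \<le> Poly_Mapping.lookup b y")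
  case True
  then show ?thesis
    using assms mingens_eq_if_le[of a I b] by (auto simp: mingens_def)
next
  case False
  then show ?thesis
    using assms mingens_eq_if_le[of b I a] by (auto simp: mingens_def)
qed

lemma finite_mingens_with_keys:
  "finite {a \<in> mingens I. Poly_Mapping.keys a = {i, j}}" (is "finite ?W")
proof (cases "?W = {}")
  case True
  then show ?thesis
    by (simp only: finite.emptyI)
next
  case False
  then obtain a0 where a0: "a0 \<in> ?W"
    by blast
  \<comment> \<open>Minimal generators are pairwise incomparable, so the others lie strictly below a0 in some
    coordinate; and a generator with support {i, j} is determined by either of its exponents.\<close>
  let ?W\<^sub>i = "{a \<in> ?W. Poly_Mapping.lookup a i < Poly_Mapping.lookup a0 i}"
  let ?W\<^sub>j = "{a \<in> ?W. Poly_Mapping.lookup a j < Poly_Mapping.lookup a0 j}"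
  have "?W \<subseteq> insert a0 (?W\<^sub>i \<union> ?W\<^sub>j)"
  proof
    fix a
    assume a: "a \<in> ?W"
    show "a \<in> insert a0 (?W\<^sub>i \<union> ?W\<^sub>j)"
    proof (cases "Poly_Mapping.lookup a i < Poly_Mapping.lookup a0 i
        \<or> Poly_Mapping.lookup a j < Poly_Mapping.lookup a0 j")
      case True
      with a show ?thesis
        by auto
    next
      case False
      with a a0 have "a0 = a"
        by (auto simp: mingens_def intro!: mingens_eq_if_le[of a0 I a])
      then show ?thesis
        by simp
    qed
  qed
  moreover have "inj_on (\<lambda>a. Poly_Mapping.lookup a i) ?W\<^sub>i"
    by (rule inj_onI) (use mingens_eq_if_same_keys_and_lookup[of _ I _ i j] in auto)
  then have "finite ?W\<^sub>i"
    by (rule inj_on_finite[where B = "{..<Poly_Mapping.lookup a0 i}"]) auto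
  moreover have "inj_on (\<lambda>a. Poly_Mapping.lookup a j) ?W\<^sub>j"
    by (rule inj_onI)
      (use mingens_eq_if_same_keys_and_lookup[of _ I _ j i] in \<open>auto simp: insert_commute\<close>)
  then have "finite ?W\<^sub>j"
    by (rule inj_on_finite[where B = "{..<Poly_Mapping.lookup a0 j}"]) auto
  ultimately show ?thesis
    by (meson finite_Un finite_insert finite_subset)
qed

lemma nu_attained:
  assumes "gedge I i j"
  shows "\<exists>g\<in>mingens I. Poly_Mapping.keys g = {i, j} \<and> Poly_Mapping.lookup g i = nu I i j"
proof -
  let ?W = "{a \<in> mingens I. Poly_Mapping.keys a = {i, j}}"
  have "nu I i j = Min ((\<lambda>a. Poly_Mapping.lookup a i) ` ?W)"
    unfolding nu_def by (rule arg_cong[where f = Min]) blast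
  moreover have "?W \<noteq> {}"
    using assms by (auto simp: gedge_def)
  ultimately have "nu I i j \<in> (\<lambda>a. Poly_Mapping.lookup a i) ` ?W"
    using finite_mingens_with_keys[of I i j] by simp
  then show ?thesis
    by auto
qed

lemma monom_mem_loc_contract_if_partner_var_not_mem:
  fixes I P :: "('n, 'k::field) mpoly set"
  assumes I: "is_ideal I" and P: "prime_ideal P" and j: "mvar j \<notin> P"
    and g: "g \<in> mingens I" "Poly_Mapping.keys g = {i, j}"
    and le: "Poly_Mapping.lookup g i \<le> Poly_Mapping.lookup f i"
  shows "monom f \<in> loc_contract I P"
proof -
  define s :: "('n, 'k) mpoly" where "s = monom (Poly_Mapping.single j (Poly_Mapping.lookup g j))"
  have "s \<notin> P"
    using prime_ideal_monom_mem_imp_var_mem[OF P] j by (fastforce simp: s_def split: if_splits)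
  moreover have "s * monom f \<in> I"
  proof -
    have "\<forall>n. Poly_Mapping.lookup g n
        \<le> Poly_Mapping.lookup (Poly_Mapping.single j (Poly_Mapping.lookup g j) + f) n"
      using g(2) le by (auto simp: lookup_add lookup_single when_def in_keys_iff)
    then show ?thesis
      using I g(1) monom_mem_if_le by (auto simp: s_def monom_add[symmetric] mingens_def)
  qed
  ultimately show ?thesis
    by (auto simp: loc_contract_def)
qed

lemma symb1_ne_if_exponent_exceeds_nu:
  fixes I :: "('n::countable, 'k::field) mpoly set"
  assumes I: "is_ideal I" "support2 I" and e: "gedge I i j"
    and covers: "\<forall>C. min_vertex_cover I C \<longrightarrow> (i \<in> C \<longleftrightarrow> j \<notin> C)"
    and u: "u \<in> mingens I" "nu I i j + 1 \<le> Poly_Mapping.lookup u i"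
  shows "symb1 I \<noteq> I"
proof -
  define f where "f = u - Poly_Mapping.single i 1"
  have u_i: "Poly_Mapping.lookup u i \<noteq> 0"
    using u(2) by simp
  have "monom f \<notin> I"
    unfolding f_def using u(1) u_i by (rule proper_divisor_of_mingens_not_mem)
  moreover have "monom f \<in> loc_contract I P" if P: "P \<in> min_ass I" for P
  proof (cases "mvar i \<in> P")
    case False
    have "mvar i * monom f = (monom u :: ('n, 'k) mpoly)"
      unfolding f_def by (rule monom_split_var[OF u_i, symmetric])
    with u(1) have "mvar i * monom f \<in> I"
      by (simp add: mingens_def)
    with False show ?thesis
      by (auto simp: loc_contract_def)
  next
    case True
    then have "mvar j \<notin> P"
      using covers min_vertex_cover_vars_in_min_ass[OF I(2) P] by (auto simp: vars_in_def)
    moreover obtain g where "g \<in> mingens I" "Poly_Mapping.keys g = {i, j}"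
      and "Poly_Mapping.lookup g i = nu I i j"
      using nu_attained[OF e] by blast
    moreover have "nu I i j \<le> Poly_Mapping.lookup f i"
      using u(2) by (simp add: f_def lookup_minus)
    ultimately show ?thesis
      using I(1) P by (intro monom_mem_loc_contract_if_partner_var_not_mem) (auto simp: min_ass_def)
  qed
  then have "monom f \<in> symb1 I"
    by (simp add: symb1_def)
  ultimately show ?thesis
    by blast
qed

theorem proposition3p1:
  fixes I :: "('n::finite, 'k::field) mpoly set"
    and i j :: 'n
  assumes "is_ideal I"
    and "support2 I"
    and "gedge I i j"
    and "\<forall>C. min_vertex_cover I C \<longrightarrow> (i \<in> C \<longleftrightarrow> j \<notin> C)"
    and "\<exists>u\<in>mingens I. nu I i j + 1 \<le> Poly_Mapping.lookup u i \<or> nu I j i + 1 \<le> Poly_Mapping.lookup u j"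
  shows "symb1 I \<noteq> I"
proof -
  obtain u where u: "u \<in> mingens I"
    and "nu I i j + 1 \<le> Poly_Mapping.lookup u i \<or> nu I j i + 1 \<le> Poly_Mapping.lookup u j"
    using assms(5) by blast
  moreover have "gedge I j i"
    using assms(3) by (auto simp: gedge_def insert_commute)
  moreover have "\<forall>C. min_vertex_cover I C \<longrightarrow> (j \<in> C \<longleftrightarrow> i \<notin> C)"
    using assms(4) by blast
  ultimately show ?thesis
    using symb1_ne_if_exponent_exceeds_nu[OF assms(1-4) u]
      symb1_ne_if_exponent_exceeds_nu[OF assms(1,2), of j i, OF _ _ u] by blast
qed

end
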